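(* Let $G=(V,E)$ and $G'=(V,E')$ be undirected graphs on the same finite vertex set $V$, in which every vertex has at least one neighbour, and let $\delta=(E\setminus E')\cup(E'\setminus E)$ be the set of inserted and deleted edges. Let $A\subseteq V$ be the set of endpoints of edges in $\delta$. Consider a random walk model of order at most two: for a graph $H$, a walk $(v_0,\dots,v_{l-1})$ started at a fixed vertex $v_0$ is generated by drawing $v_1$ from a distribution $P_H(\cdot\mid v_0)$ and, for $j\ge 1$, $v_{j+1}$ from $P_H(\cdot\mid v_{j-1},v_j)$, where $P_H(\cdot\mid v_0)$ depends on $H$ only through $N_H(v_0)$ and $P_H(\cdot\mid t,v)$ depends on $H$ only through $N_H(t)$ and $N_H(v)$ (for instance DeepWalk: uniform over $N_H(v)$; or node2vec). Let $\mathcal{W}=(w_1,\dots,w_m)$ be a walk corpus on $G$, i.e.\ independent walks of length $l$ generated on $G$ from prescribed start vertices. Form $\mathcal{W}'$ as follows: for each walk $w_i=(v_0,\dots,v_{l-1})$, if no $v_j$ lies in $A$ keep $w_i$ unchanged; otherwise let $p_{\min}$ be the least $j$ with $v_j\in A$, keep $v_0,\dots,v_{p_{\min}}$ and resample $v_{p_{\min}+1},\dots,v_{l-1}$ sequentially according to the model on $G'$ (independently across walks). Then $\mathcal{W}'$ has the same joint distribution as a walk corpus generated from scratch on $G'$ from the same start vertices; i.e.\ $\mathcal{W}'$ is statistically indistinguishable.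
   Context: $N_H(v)$ denotes the set of neighbours of $v$ in $H$. A walk corpus is a collection of random walks; "statistically indistinguishable" means that the corpus obtained by updating an existing corpus after a graph update is equi-probable (has the same distribution) as a corpus generated from scratch on the updated graph. *)

theory Defs
  imports "HOL-Probability.Probability_Mass_Function"
begin

definition ugraph :: "'v set \<Rightarrow> 'v set set \<Rightarrow> bool" where
  "ugraph V E \<longleftrightarrow> (\<forall>e\<in>E. \<exists>u v. e = {u, v} \<and> u \<noteq> v \<and> u \<in> V \<and> v \<in> V)"

definition nbrs :: "'v set set \<Rightarrow> 'v \<Rightarrow> 'v set" where
  "nbrs E v = {u. {u, v} \<in> E}"

text \<open>The graph H enters only via the neighbourhood function nbrs H.\<close>

definition walk_step ::
  "('v \<Rightarrow> 'v set \<Rightarrow> 'v pmf) \<Rightarrow> ('v \<Rightarrow> 'v \<Rightarrow> 'v set \<Rightarrow> 'v set \<Rightarrow> 'v pmf)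
   \<Rightarrow> 'v set set \<Rightarrow> 'v list \<Rightarrow> 'v pmf" where
  "walk_step P1 P2 H w =
     (if length w = 1 then P1 (hd w) (nbrs H (hd w))
      else (let t = w ! (length w - 2); v = last w in P2 t v (nbrs H t) (nbrs H v)))"

fun walk_extend ::
  "('v \<Rightarrow> 'v set \<Rightarrow> 'v pmf) \<Rightarrow> ('v \<Rightarrow> 'v \<Rightarrow> 'v set \<Rightarrow> 'v set \<Rightarrow> 'v pmf)
   \<Rightarrow> 'v set set \<Rightarrow> nat \<Rightarrow> 'v list \<Rightarrow> 'v list pmf" where
  "walk_extend P1 P2 H 0 w = return_pmf w"
| "walk_extend P1 P2 H (Suc k) w =
     bind_pmf (walk_step P1 P2 H w) (\<lambda>x. walk_extend P1 P2 H k (w @ [x]))"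

definition gen_walk ::
  "('v \<Rightarrow> 'v set \<Rightarrow> 'v pmf) \<Rightarrow> ('v \<Rightarrow> 'v \<Rightarrow> 'v set \<Rightarrow> 'v set \<Rightarrow> 'v pmf)
   \<Rightarrow> 'v set set \<Rightarrow> nat \<Rightarrow> 'v \<Rightarrow> 'v list pmf" where
  "gen_walk P1 P2 H l v0 = walk_extend P1 P2 H (l - 1) [v0]"

fun indep_list :: "'a pmf list \<Rightarrow> 'a list pmf" where
  "indep_list [] = return_pmf []"
| "indep_list (p # ps) = bind_pmf p (\<lambda>x. bind_pmf (indep_list ps) (\<lambda>xs. return_pmf (x # xs)))"

definition gen_corpus ::
  "('v \<Rightarrow> 'v set \<Rightarrow> 'v pmf) \<Rightarrow> ('v \<Rightarrow> 'v \<Rightarrow> 'v set \<Rightarrow> 'v set \<Rightarrow> 'v pmf)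
   \<Rightarrow> 'v set set \<Rightarrow> nat \<Rightarrow> 'v list \<Rightarrow> 'v list list pmf" where
  "gen_corpus P1 P2 H l starts = indep_list (map (gen_walk P1 P2 H l) starts)"

definition update_walk ::
  "('v \<Rightarrow> 'v set \<Rightarrow> 'v pmf) \<Rightarrow> ('v \<Rightarrow> 'v \<Rightarrow> 'v set \<Rightarrow> 'v set \<Rightarrow> 'v pmf)
   \<Rightarrow> 'v set set \<Rightarrow> 'v set \<Rightarrow> 'v list \<Rightarrow> 'v list pmf" where
  "update_walk P1 P2 H' A w =
     (if \<forall>j<length w. w ! j \<notin> A then return_pmf w
      else (let p = (LEAST j. j < length w \<and> w ! j \<in> A)
            in walk_extend P1 P2 H' (length w - 1 - p) (take (p + 1) w)))"

definition update_corpus ::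
  "('v \<Rightarrow> 'v set \<Rightarrow> 'v pmf) \<Rightarrow> ('v \<Rightarrow> 'v \<Rightarrow> 'v set \<Rightarrow> 'v set \<Rightarrow> 'v pmf)
   \<Rightarrow> 'v set set \<Rightarrow> 'v set \<Rightarrow> 'v list list \<Rightarrow> 'v list list pmf" where
  "update_corpus P1 P2 H' A ws = indep_list (map (update_walk P1 P2 H' A) ws)"

end

theory Submission
  imports Defs
begin

text \<open>Outside A the neighbourhoods in G and
  G' agree, so as long as a walk has not entered A its next step has the same law on both
  graphs. Induct on the number of remaining steps: while the partial walk avoids A, one step
  on G is one step on G'; as soon as it reaches A, the update discards the rest of the walk on
  G and extends this prefix on G', whatever G did. Hence each updated walk is a walk on G', and
  since walks are generated and updated independently, so is the corpus.\<close>

lemma nbrs_eq_outside_sym_diff: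
  assumes "v \<notin> \<Union>((E - E') \<union> (E' - E))"
  shows "nbrs E v = nbrs E' v"
proof -
  have "{u, v} \<in> E \<longleftrightarrow> {u, v} \<in> E'" for u
    using assms insertCI[of v "{u}" u] by blast
  then show ?thesis unfolding nbrs_def by simp
qed

lemma walk_step_cong_nbrs:
  assumes "w \<noteq> []" and "\<forall>x\<in>set w. nbrs E x = nbrs E' x"
  shows "walk_step P1 P2 E w = walk_step P1 P2 E' w"
proof (cases "length w = 1")
  case True
  then show ?thesis using assms by (simp add: walk_step_def)
next
  case False
  with assms(1) have "length w - 2 < length w" by simp
  then have "w ! (length w - 2) \<in> set w" by (rule nth_mem)
  with assms False show ?thesis by (simp add: walk_step_def Let_def)
qed

lemma set_pmf_walk_extend:
  assumes "y \<in> set_pmf (walk_extend P1 P2 H k u)"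
  shows "\<exists>r. y = u @ r \<and> length r = k"
  using assms
proof (induction k arbitrary: u)
  case (Suc k)
  then obtain x where "y \<in> set_pmf (walk_extend P1 P2 H k (u @ [x]))" by auto
  from Suc.IH[OF this] obtain r where "y = u @ [x] @ r" "length r = k" by auto
  then show ?case by (intro exI[of _ "x # r"]) auto
qed simp

lemma update_walk_avoiding:
  assumes "set w \<inter> A = {}"
  shows "update_walk P1 P2 H' A w = return_pmf w"
proof -
  have "\<forall>j<length w. w ! j \<notin> A"
    using assms nth_mem by blast
  then show ?thesis by (simp add: update_walk_def)
qed

lemma update_walk_first_hit:
  assumes "u \<noteq> []" and "last u \<in> A" and "set (butlast u) \<inter> A = {}"
  shows "update_walk P1 P2 H' A (u @ r) = walk_extend P1 P2 H' (length r) u"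
proof -
  let ?p = "length u - 1"
  have hit: "(u @ r) ! ?p = last u"
    using assms(1) by (simp add: nth_append last_conv_nth)
  have p_less: "?p < length (u @ r)"
    using assms(1) by (cases u) auto
  have not_avoiding: "\<not> (\<forall>j<length (u @ r). (u @ r) ! j \<notin> A)"
  proof
    assume "\<forall>j<length (u @ r). (u @ r) ! j \<notin> A"
    with p_less hit assms(2) show False by metis
  qed
  have least: "(LEAST j. j < length (u @ r) \<and> (u @ r) ! j \<in> A) = ?p"
  proof (rule Least_equality)
    show "?p < length (u @ r) \<and> (u @ r) ! ?p \<in> A"
      using p_less hit assms(2) by simp
  next
    fix j assume j: "j < length (u @ r) \<and> (u @ r) ! j \<in> A"
    show "?p \<le> j"
    proof (rule ccontr)
      assume "\<not> ?p \<le> j"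
      then have j_less: "j < length (butlast u)" by simp
      then have "(u @ r) ! j = butlast u ! j"
        by (auto simp: nth_append nth_butlast)
      with j_less have "(u @ r) ! j \<in> set (butlast u)" by simp
      with j assms(3) show False by blast
    qed
  qed
  have "take (?p + 1) (u @ r) = u" and "length (u @ r) - 1 - ?p = length r"
    using assms(1) by (simp_all add: Suc_leI)
  then show ?thesis
    unfolding update_walk_def if_not_P[OF not_avoiding] Let_def least by (simp only:)
qed

lemma bind_walk_extend_update_walk_first_hit:
  assumes "u \<noteq> []" and "last u \<in> A" and "set (butlast u) \<inter> A = {}"
  shows "bind_pmf (walk_extend P1 P2 E k u) (update_walk P1 P2 E' A) = walk_extend P1 P2 E' k u"
proof -
  have "bind_pmf (walk_extend P1 P2 E k u) (update_walk P1 P2 E' A)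
      = bind_pmf (walk_extend P1 P2 E k u) (\<lambda>_. walk_extend P1 P2 E' k u)"
  proof (rule bind_pmf_cong[OF refl])
    fix y assume "y \<in> set_pmf (walk_extend P1 P2 E k u)"
    then obtain r where "y = u @ r" "length r = k"
      using set_pmf_walk_extend by blast
    then show "update_walk P1 P2 E' A y = walk_extend P1 P2 E' k u"
      using update_walk_first_hit[OF assms, of P1 P2 E' r] by simp
  qed
  then show ?thesis by (simp add: bind_pmf_const)
qed

lemma bind_walk_extend_update_walk_avoiding:
  assumes "u \<noteq> []" and "set u \<inter> A = {}"
    and nbrs_eq: "\<And>v. v \<notin> A \<Longrightarrow> nbrs E v = nbrs E' v"
  shows "bind_pmf (walk_extend P1 P2 E k u) (update_walk P1 P2 E' A) = walk_extend P1 P2 E' k u"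
  using assms(1,2)
proof (induction k arbitrary: u)
  case 0
  then show ?case by (simp add: bind_return_pmf update_walk_avoiding)
next
  case (Suc k)
  have "walk_step P1 P2 E u = walk_step P1 P2 E' u"
    using Suc.prems nbrs_eq by (intro walk_step_cong_nbrs) auto
  moreover have "bind_pmf (walk_extend P1 P2 E k (u @ [x])) (update_walk P1 P2 E' A)
      = walk_extend P1 P2 E' k (u @ [x])" for x
  proof (cases "x \<in> A")
    case True
    with Suc.prems show ?thesis by (intro bind_walk_extend_update_walk_first_hit) auto
  next
    case False
    with Suc.prems show ?thesis by (intro Suc.IH) auto
  qed
  ultimately show ?case by (simp add: bind_assoc_pmf)
qed

lemma bind_gen_walk_update_walk:
  assumes "\<And>v. v \<notin> A \<Longrightarrow> nbrs E v = nbrs E' v"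
  shows "bind_pmf (gen_walk P1 P2 E l v0) (update_walk P1 P2 E' A) = gen_walk P1 P2 E' l v0"
  unfolding gen_walk_def
proof (cases "v0 \<in> A")
  case True
  then show "bind_pmf (walk_extend P1 P2 E (l - 1) [v0]) (update_walk P1 P2 E' A)
      = walk_extend P1 P2 E' (l - 1) [v0]"
    by (intro bind_walk_extend_update_walk_first_hit) auto
next
  case False
  with assms show "bind_pmf (walk_extend P1 P2 E (l - 1) [v0]) (update_walk P1 P2 E' A)
      = walk_extend P1 P2 E' (l - 1) [v0]"
    by (intro bind_walk_extend_update_walk_avoiding) auto
qed

lemma bind_indep_list_map:
  "bind_pmf (indep_list (map g xs)) (\<lambda>ws. indep_list (map h ws))
   = indep_list (map (\<lambda>x. bind_pmf (g x) h) xs)"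
proof (induction xs)
  case Nil
  then show ?case by (simp add: bind_return_pmf)
next
  case (Cons a as)
  have "bind_pmf (indep_list (map g (a # as))) (\<lambda>ws. indep_list (map h ws))
     = bind_pmf (g a) (\<lambda>x. bind_pmf (indep_list (map g as)) (\<lambda>xs.
         bind_pmf (h x) (\<lambda>y. bind_pmf (indep_list (map h xs)) (\<lambda>ys. return_pmf (y # ys)))))"
    by (simp add: bind_assoc_pmf bind_return_pmf)
  also have "\<dots> = bind_pmf (g a) (\<lambda>x. bind_pmf (h x) (\<lambda>y. bind_pmf (indep_list (map g as)) (\<lambda>xs.
         bind_pmf (indep_list (map h xs)) (\<lambda>ys. return_pmf (y # ys)))))"
    by (subst bind_commute_pmf) (rule refl)
  also have "\<dots> = bind_pmf (g a) (\<lambda>x. bind_pmf (h x) (\<lambda>y.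
         bind_pmf (indep_list (map (\<lambda>x. bind_pmf (g x) h) as)) (\<lambda>ys. return_pmf (y # ys))))"
    by (simp add: bind_assoc_pmf[symmetric] Cons.IH)
  also have "\<dots> = indep_list (map (\<lambda>x. bind_pmf (g x) h) (a # as))"
    by (simp add: bind_assoc_pmf)
  finally show ?case .
qed

theorem mainTheorem4:
  fixes V :: "'v set" and E E' :: "'v set set"
    and P1 :: "'v \<Rightarrow> 'v set \<Rightarrow> 'v pmf"
    and P2 :: "'v \<Rightarrow> 'v \<Rightarrow> 'v set \<Rightarrow> 'v set \<Rightarrow> 'v pmf"
    and l :: nat and starts :: "'v list"
  assumes "finite V"
    and "ugraph V E" and "ugraph V E'"
    and "\<forall>v\<in>V. nbrs E v \<noteq> {}" and "\<forall>v\<in>V. nbrs E' v \<noteq> {}"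
    and "l \<ge> 1"
    and "set starts \<subseteq> V"
  shows "bind_pmf (gen_corpus P1 P2 E l starts)
           (update_corpus P1 P2 E' (\<Union>((E - E') \<union> (E' - E))))
         = gen_corpus P1 P2 E' l starts"
proof -
  let ?A = "\<Union>((E - E') \<union> (E' - E))"
  have walk: "bind_pmf (gen_walk P1 P2 E l v0) (update_walk P1 P2 E' ?A) = gen_walk P1 P2 E' l v0"
    for v0 by (intro bind_gen_walk_update_walk nbrs_eq_outside_sym_diff)
  show ?thesis
    unfolding gen_corpus_def update_corpus_def bind_indep_list_map walk ..
qed

end
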